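(* Let $A\subset\mathcal R$ be a zone with width $w(A)=w$. Then there is a unique finite Puiseux series $$p(y)=a_1y^{r_1}+\cdots+a_ny^{r_n},$$ with $r_i$ positive rational numbers, $r_1<\cdots<r_n<\frac1w$, such that every $\alpha\in A$ has the form $$\alpha(y)=p(y)+\mathrm{h.o.t.}_{\ge \frac1w},$$ where $\mathrm{h.o.t.}_{\ge\frac1w}$ denotes a sum of nonzero terms of order greater than or equal to $\frac1w$.
   Context: Let $\mathcal R$ be the set of germs at $0$ of analytic arcs $\{x=\alpha(y),\ y\ge 0\}$ in the closed upper half-plane of $\mathbb R^2$ (half-branches of analytic curves through $0$), where $\alpha$ is given by a convergent Puiseux series $\alpha(y)=\sum_i c_iy^{p_i}$ with positive rational exponents $p_1<p_2<\cdots$. The order $\mathcal O(\gamma)$ of a Puiseux series $\gamma$ is the smallest exponent appearing with nonzero coefficient ($\mathcal O(0)=+\infty$). For $\alpha,\beta\in\mathcal R$ write $\alpha<\beta$ if $\alpha(y)<\beta(y)$ for all sufficiently small $y>0$. A subset $A\subset\mathcal R$ is a zone (is connected) if whenever $\alpha,\beta\in A$ with $\alpha<\beta$ and $\gamma\in\mathcal R$ with $\alpha<\gamma<\beta$, then $\gamma\in A$. The distance of two arcs is $d(\alpha,\beta)=1/\mathcal O(\alpha-\beta)$ (with $1/\infty=0$), and the width of a zone is $w(A)=\sup\{d(\alpha,\beta):\alpha,\beta\in A\}$. *)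

theory Defs
  imports "HOL-Analysis.Analysis" "HOL-Library.Extended_Real"
begin

text \<open>A Puiseux series with real coefficients is represented by its coefficient
  function c :: rat => real (c q is the coefficient of y^q).\<close>

type_synonym puiseux = "rat \<Rightarrow> real"

text \<open>Convergent Puiseux series with positive rational exponents (bounded denominators)
  and positive radius of convergence: these are the elements of the set R of arcs.\<close>
definition is_arc :: "puiseux \<Rightarrow> bool" where
  "is_arc c \<longleftrightarrow> (\<exists>N::nat. N > 0 \<and>
      (\<forall>q. c q \<noteq> 0 \<longrightarrow> q > 0 \<and> (\<exists>k::nat. q = of_nat k / of_nat N)) \<and>
      (\<exists>\<rho>::real. \<rho> > 0 \<and> summable (\<lambda>k::nat. \<bar>c (of_nat k / of_nat N)\<bar> * \<rho> ^ k)))"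

definition arcs :: "puiseux set" where
  "arcs = {c. is_arc c}"

text \<open>The value alpha(y) of the arc (for small y > 0 the series converges absolutely).\<close>
definition arc_val :: "puiseux \<Rightarrow> real \<Rightarrow> real" where
  "arc_val c y = (\<Sum>\<^sub>\<infinity>q. c q * y powr (real_of_rat q))"

definition arc_less :: "puiseux \<Rightarrow> puiseux \<Rightarrow> bool" where
  "arc_less a b \<longleftrightarrow> (\<forall>\<^sub>F y in at_right 0. arc_val a y < arc_val b y)"

text \<open>Order: smallest exponent with nonzero coefficient; O(0) = infinity.\<close>
definition ord :: "puiseux \<Rightarrow> ereal" where
  "ord c = Inf ((\<lambda>q. ereal (real_of_rat q)) ` {q. c q \<noteq> 0})"

definition arc_dist :: "puiseux \<Rightarrow> puiseux \<Rightarrow> ereal" where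
  "arc_dist a b = 1 / ord (\<lambda>q. a q - b q)"

definition is_zone :: "puiseux set \<Rightarrow> bool" where
  "is_zone A \<longleftrightarrow> A \<subseteq> arcs \<and>
     (\<forall>a\<in>A. \<forall>b\<in>A. \<forall>g\<in>arcs. arc_less a b \<longrightarrow> arc_less a g \<longrightarrow> arc_less g b \<longrightarrow> g \<in> A)"

definition width :: "puiseux set \<Rightarrow> ereal" where
  "width A = Sup {arc_dist a b | a b. a \<in> A \<and> b \<in> A}"

end

theory Submission
  imports Defs
begin

text \<open>Two arcs of a zone of width \<open>w\<close> have distance at most \<open>w\<close>, i.e. they agree in all
  exponents below \<open>1/w\<close>. Hence \<open>p\<close> is the truncation of any single arc of the zone below \<open>1/w\<close>;
  it is a finite sum because the exponents of an arc lie in \<open>(1/N)\<nat>\<close>, and it is unique because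
  a series supported below \<open>1/w\<close> is determined by its terms of order less than \<open>1/w\<close>.\<close>

definition truncate :: "ereal \<Rightarrow> puiseux \<Rightarrow> puiseux" where
  "truncate r c q = (if ereal (real_of_rat q) < r then c q else 0)"

lemma le_ord_iff: "r \<le> ord c \<longleftrightarrow> (\<forall>q. c q \<noteq> 0 \<longrightarrow> r \<le> ereal (real_of_rat q))"
  unfolding ord_def by (auto simp: le_Inf_iff)

lemma ereal_inverse_le_swap:
  fixes u w :: ereal
  assumes "0 \<le> u" "0 < w" "1 / u \<le> w"
  shows "1 / w \<le> u"
  using assms by (cases u; cases w) (auto simp: divide_ereal_def field_simps split: if_splits)

lemma arc_exponent_pos: "c \<in> arcs \<Longrightarrow> c q \<noteq> 0 \<Longrightarrow> 0 < q"
  unfolding arcs_def is_arc_def by auto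

lemma ord_diff_arcs_nonneg:
  assumes "a \<in> arcs" "b \<in> arcs"
  shows "0 \<le> ord (\<lambda>q. a q - b q)"
  unfolding le_ord_iff
  using arc_exponent_pos[OF assms(1)] arc_exponent_pos[OF assms(2)]
  by (metis diff_self less_imp_le of_rat_less_0_iff not_le zero_ereal_def ereal_less_eq(3))

lemma arc_dist_le_width: "a \<in> A \<Longrightarrow> b \<in> A \<Longrightarrow> arc_dist a b \<le> width A"
  unfolding width_def by (rule Sup_upper) blast

lemma inverse_width_le_ord_diff:
  assumes "A \<subseteq> arcs" "0 < width A" "a \<in> A" "b \<in> A"
  shows "1 / width A \<le> ord (\<lambda>q. a q - b q)"
proof (rule ereal_inverse_le_swap)
  show "0 \<le> ord (\<lambda>q. a q - b q)"
    using assms by (intro ord_diff_arcs_nonneg) auto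
  show "1 / ord (\<lambda>q. a q - b q) \<le> width A"
    using arc_dist_le_width[OF assms(3,4)] by (simp add: arc_dist_def)
qed (fact assms(2))

lemma width_empty: "width {} = -\<infinity>"
  unfolding width_def by (simp add: bot_ereal_def)

lemma truncate_exponent_pos: "c \<in> arcs \<Longrightarrow> truncate r c q \<noteq> 0 \<Longrightarrow> 0 < q"
  unfolding truncate_def using arc_exponent_pos by (auto split: if_splits)

lemma truncate_exponent_less: "truncate r c q \<noteq> 0 \<Longrightarrow> ereal (real_of_rat q) < r"
  unfolding truncate_def by (auto split: if_splits)

lemma finite_support_truncate:
  assumes "c \<in> arcs" "r < \<infinity>"
  shows "finite {q. truncate r c q \<noteq> 0}"
proof (cases r)
  case (real s)
  obtain N :: nat where N: "N > 0" "\<forall>q. c q \<noteq> 0 \<longrightarrow> (\<exists>k::nat. q = of_nat k / of_nat N)"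
    using assms(1) unfolding arcs_def is_arc_def by blast
  have "{q. truncate r c q \<noteq> 0} \<subseteq> (\<lambda>k. of_nat k / of_nat N) ` {..nat \<lceil>real N * s\<rceil>}"
  proof
    fix q assume "q \<in> {q. truncate r c q \<noteq> 0}"
    then have q: "c q \<noteq> 0" "real_of_rat q < s"
      unfolding truncate_def using real by (auto split: if_splits)
    then obtain k :: nat where k: "q = of_nat k / of_nat N" using N by blast
    then have "real_of_rat q = real k / real N" by (simp add: of_rat_divide)
    then have "real k = real N * real_of_rat q" using N by (simp add: field_simps)
    also have "\<dots> < real N * s" using q N by simp
    finally have "k \<le> nat \<lceil>real N * s\<rceil>" by linarith
    then show "q \<in> (\<lambda>k. of_nat k / of_nat N) ` {..nat \<lceil>real N * s\<rceil>}" using k by auto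
  qed
  then show ?thesis by (rule finite_subset) auto
qed (use assms(2) in \<open>auto simp: truncate_def\<close>)

lemma le_ord_diff_truncate:
  assumes "r \<le> ord (\<lambda>q. a q - b q)"
  shows "r \<le> ord (\<lambda>q. a q - truncate r b q)"
  using assms unfolding le_ord_iff truncate_def by (metis diff_zero not_le)

lemma eq_truncate_if_le_ord_diff:
  assumes "\<forall>q. p q \<noteq> 0 \<longrightarrow> ereal (real_of_rat q) < r" "r \<le> ord (\<lambda>q. a q - p q)"
  shows "p = truncate r a"
proof
  fix q
  show "p q = truncate r a q"
  proof (cases "ereal (real_of_rat q) < r")
    case True
    then show ?thesis
      using assms(2) unfolding le_ord_iff truncate_def by (metis not_le eq_iff_diff_eq_0)
  qed (use assms(1) in \<open>auto simp: truncate_def\<close>)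
qed

theorem lemma5p1:
  fixes A :: "puiseux set" and w :: ereal
  assumes "is_zone A" and "width A = w" and "w > 0"
  shows "\<exists>!p :: puiseux. finite {q. p q \<noteq> 0} \<and>
           (\<forall>q. p q \<noteq> 0 \<longrightarrow> q > 0 \<and> ereal (real_of_rat q) < 1 / w) \<and>
           (\<forall>\<alpha>\<in>A. ord (\<lambda>q. \<alpha> q - p q) \<ge> 1 / w)"
proof -
  have arcs: "A \<subseteq> arcs" using assms(1) unfolding is_zone_def by auto
  obtain a0 where a0: "a0 \<in> A" using assms width_empty by fastforce
  have close: "1 / w \<le> ord (\<lambda>q. \<alpha> q - a0 q)" if "\<alpha> \<in> A" for \<alpha>
    using inverse_width_le_ord_diff[OF arcs _ that a0] assms(2,3) by simp
  have "1 / w < \<infinity>" using assms(3) by (cases w) (auto simp: divide_ereal_def)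
  show ?thesis
  proof (rule ex1I[where a = "truncate (1 / w) a0"], intro conjI allI impI ballI)
    show "finite {q. truncate (1 / w) a0 q \<noteq> 0}"
      using a0 arcs \<open>1 / w < \<infinity>\<close> by (intro finite_support_truncate) auto
    show "0 < q" "ereal (real_of_rat q) < 1 / w" if "truncate (1 / w) a0 q \<noteq> 0" for q
      using that a0 arcs truncate_exponent_pos truncate_exponent_less by blast+
    show "1 / w \<le> ord (\<lambda>q. \<alpha> q - truncate (1 / w) a0 q)" if "\<alpha> \<in> A" for \<alpha>
      using close[OF that] by (rule le_ord_diff_truncate)
  next
    fix p assume "finite {q. p q \<noteq> 0} \<and>
           (\<forall>q. p q \<noteq> 0 \<longrightarrow> q > 0 \<and> ereal (real_of_rat q) < 1 / w) \<and>
           (\<forall>\<alpha>\<in>A. ord (\<lambda>q. \<alpha> q - p q) \<ge> 1 / w)"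
    then show "p = truncate (1 / w) a0"
      using a0 by (intro eq_truncate_if_le_ord_diff) auto
  qed
qed

end
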